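(* Let $t\geq 2$ be an integer, $m=4t+2$ and $n=2^m+1$, and let $x$ be an odd integer. Then: (1) if $1\leq x\leq 2^{2t+1}-1$, $x$ is a coset leader; (2) if $2^{2t+1}+3\leq x\leq 2^{2t+2}-5$, $x$ is a coset leader; (3) if $2^{2t+2}+5\leq x\leq 2^{2t+2}+2^{2t}-3$, $x$ is a coset leader; (4) if $2^{2t+2}+2^{2t}+3\leq x\leq 2^{2t+2}+2^{2t+1}-3$, $x$ is a coset leader; (5) if $x=2^{2t+1}+1$, or $2^{2t+2}-3\leq x\leq 2^{2t+2}+3$, or $2^{2t+2}+2^{2t}-1\leq x\leq 2^{2t+2}+2^{2t}+1$, or $2^{2t+2}+2^{2t+1}-1\leq x\leq 2^{2t+2}+2^{2t+1}+3$, then $x$ is not a coset leader.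
   Context: For $n=2^m+1$ and an integer $x$, the 2-cyclotomic coset of $x$ modulo $n$ is $C_x=\{x\cdot 2^{j} \bmod n : j\geq 0\}\subseteq\{0,1,\dots,n-1\}$. For $0\leq x\leq n-1$, "$x$ is a coset leader" means that $x$ is the smallest element of $C_x$. *)

theory Defs
  imports Main
begin

definition cyc_coset :: "nat \<Rightarrow> nat \<Rightarrow> nat set" where
  "cyc_coset n x = {(x * 2 ^ j) mod n | j. True}"

definition coset_leader :: "nat \<Rightarrow> nat \<Rightarrow> bool" where
  "coset_leader n x \<longleftrightarrow> x < n \<and> x \<in> cyc_coset n x \<and> (\<forall>y \<in> cyc_coset n x. x \<le> y)"

end

theory Submission
  imports Defs
begin

text \<open>
  Since \<open>2^m \<equiv> -1 (mod n)\<close>, the coset of an odd \<open>x < 2^m\<close> consists of the residues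
  \<open>N\<^sub>p = x * 2^(m-p) mod n\<close> and \<open>n - N\<^sub>p\<close> for \<open>1 \<le> p \<le> m\<close>, where \<open>N\<^sub>p\<close> is obtained by
  rotating the low \<open>p\<close> bits of \<open>x\<close> to the top and subtracting the remaining high bits.
  So \<open>x\<close> is a leader iff \<open>x \<le> N\<^sub>p \<le> n - x\<close> for all \<open>p\<close>.
  With \<open>Q = 2^(2t-1)\<close> we have \<open>2^m = 16 Q\<^sup>2\<close>, and every \<open>x\<close> of the theorem is \<open>h Q + w\<close>
  with \<open>h \<le> 12\<close>, \<open>w < Q\<close>. For such \<open>x\<close> the condition is automatic unless
  \<open>2t-1 \<le> p \<le> 2t+2\<close>, and for these four \<open>p\<close> it is linear in \<open>w\<close> once \<open>h\<close> is fixed,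
  which leaves a finite case analysis over \<open>h\<close>.
\<close>

text \<open>The low \<open>p\<close> bits of \<open>x\<close> moved to the top, minus the high bits, which wrap around
  with a sign change because \<open>2^m \<equiv> -1 (mod 2^m + 1)\<close>.\<close>
definition neg_rot :: "nat \<Rightarrow> nat \<Rightarrow> nat \<Rightarrow> nat" where
  "neg_rot m p x = (x mod 2^p) * 2^(m-p) - x div 2^p"

lemma shifted_low_bits_bounds:
  fixes x m p :: nat
  assumes "odd x" "1 \<le> p" "p \<le> m"
  shows "2^(m-p) \<le> (x mod 2^p) * 2^(m-p)"
    and "(x mod 2^p) * 2^(m-p) + 2^(m-p) \<le> 2^m"
proof -
  have "odd (x mod 2^p)"
    using assms(1,2) by (simp add: odd_iff_mod_2_eq_one mod_mod_cancel le_imp_power_dvd[of 1 p 2, simplified])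
  then show "2^(m-p) \<le> (x mod 2^p) * 2^(m-p)"
    by (cases "x mod 2^p") auto
  have "x mod 2^p + 1 \<le> 2^p"
    by (simp add: Suc_le_eq)
  from mult_le_mono1[OF this, of "2^(m-p)"] show "(x mod 2^p) * 2^(m-p) + 2^(m-p) \<le> 2^m"
    using assms(3) by (simp add: power_add[symmetric])
qed

lemma neg_rot_eq_mult_pow2_mod:
  fixes x m p :: nat
  assumes "odd x" "x < 2^m" "1 \<le> p" "p \<le> m"
  shows "neg_rot m p x = x * 2^(m-p) mod (2^m+1)"
    and "0 < neg_rot m p x"
proof -
  define H L b n where "H = x div 2^p" and "L = x mod 2^p" and "b = (2::nat)^(m-p)"
    and "n = (2::nat)^m + 1"
  note bounds = shifted_low_bits_bounds[OF assms(1,3,4), folded L_def b_def]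
  have m: "2^m = 2^p * b"
    using assms(4) by (simp add: b_def power_add[symmetric])
  then have "H < b"
    using assms(2) by (simp add: H_def div_less_iff_less_mult mult.commute)
  with bounds(1) have HL: "H < L * b" by linarith
  have "x = 2^p * H + L"
    by (simp add: H_def L_def)
  then have "x * b = (L * b - H) + H * n"
    using HL m by (simp add: n_def algebra_simps)
  moreover have "L * b - H < n"
    using bounds(2) by (simp add: n_def)
  ultimately have "x * b mod n = L * b - H"
    by (simp only: mod_mult_self1 mod_less)
  then show "neg_rot m p x = x * 2^(m-p) mod (2^m+1)"
    by (simp add: neg_rot_def H_def L_def b_def n_def)
  show "0 < neg_rot m p x"
    using HL by (simp add: neg_rot_def H_def L_def b_def)
qed

lemma mult_pow2_add_mod:
  fixes x m r :: nat
  assumes "x * 2^r mod (2^m+1) \<noteq> 0"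
  shows "x * 2^(m+r) mod (2^m+1) = 2^m + 1 - x * 2^r mod (2^m+1)"
proof -
  define n a g where "n = (2::nat)^m + 1" and "a = x * 2^(m+r) mod n" and "g = x * 2^r mod n"
  have "x * 2^(m+r) + x * 2^r = x * 2^r * n"
    by (simp add: n_def power_add algebra_simps)
  then have "(a + g) mod n = 0"
    unfolding a_def g_def mod_add_eq by simp
  then obtain q where q: "a + g = n * q"
    by blast
  have "0 < n" "a < n" "g < n" "0 < g"
    using assms by (simp_all add: n_def a_def g_def)
  then have "n * q < n * 2"
    using q by linarith
  moreover have "q \<noteq> 0"
    using q \<open>0 < g\<close> by (cases q) simp_all
  ultimately have "q = 1"
    by simp
  then show ?thesis
    using q by (simp add: n_def a_def g_def)
qed

lemma pow2_double_mod: "2^(2*m) mod (2^m+1) = (1::nat)"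
  unfolding mult_2 using mult_pow2_add_mod[of 1 m m] by simp

lemma mult_pow2_mod_period:
  fixes x j m :: nat
  shows "x * 2^j mod (2^m+1) = x * 2^(j mod (2*m)) mod (2^m+1)"
proof -
  define n where "n = (2::nat)^m + 1"
  have "(2::nat)^j = 2^(j mod (2*m)) * (2^(2*m))^(j div (2*m))"
    unfolding power_mult[symmetric] power_add[symmetric] mod_mult_div_eq ..
  then have "x * 2^j mod n = x * 2^(j mod (2*m)) * (2^(2*m))^(j div (2*m)) mod n"
    by (simp add: mult.assoc)
  also have "\<dots> = x * 2^(j mod (2*m)) * ((2^(2*m))^(j div (2*m)) mod n) mod n"
    by (rule mod_mult_right_eq[symmetric])
  also have "(2^(2*m))^(j div (2*m)) mod n = (2^(2*m) mod n)^(j div (2*m)) mod n"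
    by (rule power_mod[symmetric])
  also have "\<dots> = 1"
    unfolding n_def pow2_double_mod by simp
  finally show ?thesis
    by (simp add: n_def)
qed

lemma cyc_coset_neg_rot:
  fixes x m :: nat
  assumes "odd x" "x < 2^m"
  shows "cyc_coset (2^m+1) x =
    (\<lambda>p. neg_rot m p x) ` {1..m} \<union> (\<lambda>p. 2^m + 1 - neg_rot m p x) ` {1..m}"
    (is "_ = ?low \<union> ?high")
proof
  note rot = neg_rot_eq_mult_pow2_mod[OF assms]
  show "?low \<union> ?high \<subseteq> cyc_coset (2^m+1) x"
  proof
    fix y assume "y \<in> ?low \<union> ?high"
    then obtain p where p: "1 \<le> p" "p \<le> m"
      and "y = neg_rot m p x \<or> y = 2^m + 1 - neg_rot m p x" by auto
    moreover have "2^m + 1 - neg_rot m p x = x * 2^(m + (m-p)) mod (2^m+1)"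
      using mult_pow2_add_mod[of x "m-p" m] rot[OF p] by simp
    ultimately show "y \<in> cyc_coset (2^m+1) x"
      unfolding cyc_coset_def using rot(1)[OF p] by blast
  qed
  show "cyc_coset (2^m+1) x \<subseteq> ?low \<union> ?high"
  proof
    fix y assume "y \<in> cyc_coset (2^m+1) x"
    then obtain j where "y = x * 2^j mod (2^m+1)"
      unfolding cyc_coset_def by blast
    then have y: "y = x * 2^(j mod (2*m)) mod (2^m+1)"
      using mult_pow2_mod_period by simp
    have "m \<noteq> 0" using assms by (cases m) auto
    then have r: "j mod (2*m) < 2*m" by simp
    show "y \<in> ?low \<union> ?high"
    proof (cases "j mod (2*m) < m")
      case True
      then have "y = neg_rot m (m - j mod (2*m)) x"
        using y rot[of "m - j mod (2*m)"] by simp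
      with True show ?thesis by auto
    next
      case False
      define p where "p = 2*m - j mod (2*m)"
      have p: "1 \<le> p" "p \<le> m" "j mod (2*m) = m + (m - p)"
        using False r by (auto simp: p_def)
      then have "y = 2^m + 1 - neg_rot m p x"
        using y mult_pow2_add_mod[of x "m-p" m] rot[OF p(1,2)] by simp
      with p show ?thesis by auto
    qed
  qed
qed

lemma coset_leader_iff_neg_rot:
  fixes x m :: nat
  assumes "odd x" "x < 2^m"
  shows "coset_leader (2^m+1) x \<longleftrightarrow>
    (\<forall>p\<in>{1..m}. x \<le> neg_rot m p x \<and> neg_rot m p x + x \<le> 2^m+1)"
proof -
  note rot = neg_rot_eq_mult_pow2_mod[OF assms]
  have "m \<noteq> 0" using assms by (cases m) auto
  moreover have "neg_rot m m x = x"
    using assms(2) by (simp add: neg_rot_def)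
  ultimately have "x \<in> cyc_coset (2^m+1) x"
    unfolding cyc_coset_neg_rot[OF assms] by (intro UnI1 image_eqI[where x=m]) auto
  moreover have "x \<le> 2^m + 1 - neg_rot m p x \<longleftrightarrow> neg_rot m p x + x \<le> 2^m+1"
    if "p \<in> {1..m}" for p
  proof -
    have "neg_rot m p x < 2^m + 1"
      using rot(1)[of p] that by simp
    then show ?thesis by linarith
  qed
  ultimately show ?thesis
    unfolding coset_leader_def cyc_coset_neg_rot[OF assms] ball_Un
    using assms(2) by auto
qed

lemma neg_rot_bounds_of_double_le:
  fixes x m p :: nat
  assumes "odd x" "1 \<le> p" "p \<le> m" "2 * x \<le> 2^(m-p)"
  shows "x \<le> neg_rot m p x \<and> neg_rot m p x + x \<le> 2^m+1"
proof -
  have "x div 2^p \<le> x" by simp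
  with shifted_low_bits_bounds[OF assms(1-3)] assms(4) show ?thesis
    unfolding neg_rot_def by linarith
qed

lemma neg_rot_bounds_of_less:
  fixes x m p :: nat
  assumes "x < 2^p" "x * 2^(m-p) + x \<le> 2^m+1"
  shows "x \<le> neg_rot m p x \<and> neg_rot m p x + x \<le> 2^m+1"
  using assms by (simp add: neg_rot_def)

lemma pow2_ge_8: "3 \<le> k \<Longrightarrow> 8 \<le> (2::nat)^k"
  using power_increasing[of 3 k "2::nat"] by simp

lemma pow2_double_add_4: "(2::nat)^(2*k+4) = 16 * (2^k * 2^k)"
  by (simp add: power_add mult.commute[of 2 k] power_mult power2_eq_square)

definition mid_rot :: "nat \<Rightarrow> nat \<Rightarrow> nat \<Rightarrow> nat \<Rightarrow> nat" where
  "mid_rot Q e h w = (h mod 2^e) * 2^(4-e) * (Q*Q) + 2^(4-e) * (Q*w) - h div 2^e"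

lemma neg_rot_eq_mid_rot:
  fixes x k e Q :: nat
  assumes "Q = 2^k" "e \<le> 4"
  shows "neg_rot (2*k+4) (k+e) x = mid_rot Q e (x div Q) (x mod Q)"
proof -
  have "2*k + 4 - (k+e) = k + (4-e)" using assms(2) by simp
  then have "neg_rot (2*k+4) (k+e) x = (Q * (x div Q mod 2^e) + x mod Q) * (Q * 2^(4-e)) - x div Q div 2^e"
    unfolding neg_rot_def assms(1) by (simp add: power_add mod_mult2_eq div_mult2_eq)
  then show ?thesis
    by (simp add: mid_rot_def algebra_simps)
qed

lemma neg_rot_bounds_outside_middle:
  fixes x k p Q :: nat
  assumes Q: "Q = 2^k" and "3 \<le> k" "odd x" "x \<le> 13 * Q" "1 \<le> p" "p \<le> 2*k+4" "p < k \<or> k+4 \<le> p"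
  shows "x \<le> neg_rot (2*k+4) p x \<and> neg_rot (2*k+4) p x + x \<le> 2^(2*k+4)+1"
proof (cases "p < k")
  case True
  \<comment> \<open>the shift factor \<open>2^(2k+4-p) \<ge> 32 Q\<close> dominates\<close>
  have "(2::nat)^(k+5) \<le> 2^(2*k+4-p)" using True by (intro power_increasing) auto
  then have "32 * Q \<le> 2^(2*k+4-p)" by (simp add: Q power_add)
  then show ?thesis
    using neg_rot_bounds_of_double_le[OF assms(3,5,6)] assms(4) by simp
next
  case False
  \<comment> \<open>no bits wrap around\<close>
  have "8 \<le> Q" using pow2_ge_8[OF assms(2)] Q by simp
  have "(2::nat)^(k+4) \<le> 2^p" using False assms(7) by (intro power_increasing) auto
  then have "x < 2^p" using assms(4) \<open>8 \<le> Q\<close> by (simp add: Q power_add)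
  have "(2::nat)^(2*k+4-p) \<le> Q" using False assms(7) unfolding Q by (intro power_increasing) auto
  from mult_le_mono[OF assms(4) this] have "x * 2^(2*k+4-p) \<le> 13 * (Q*Q)" by simp
  moreover have "13 * Q \<le> 3 * (Q*Q)" using \<open>8 \<le> Q\<close> by simp
  ultimately have "x * 2^(2*k+4-p) + x \<le> 2^(2*k+4)+1"
    using assms(4) pow2_double_add_4[of k] unfolding Q[symmetric] by linarith
  with \<open>x < 2^p\<close> show ?thesis by (rule neg_rot_bounds_of_less)
qed

lemma coset_leader_iff_mid_rot:
  fixes x k Q :: nat
  assumes Q: "Q = 2^k" and "3 \<le> k" "odd x" "x \<le> 13 * Q"
  shows "coset_leader (2^(2*k+4)+1) x \<longleftrightarrow>
    (\<forall>e\<le>3. x \<le> mid_rot Q e (x div Q) (x mod Q) \<and> mid_rot Q e (x div Q) (x mod Q) + x \<le> 16*(Q*Q)+1)"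
proof -
  define m where "m = 2*k+4"
  define ok where "ok p \<longleftrightarrow> x \<le> neg_rot m p x \<and> neg_rot m p x + x \<le> 2^m+1" for p
  have m: "(2::nat)^m = 16*(Q*Q)" using pow2_double_add_4[of k] by (simp add: m_def Q)
  have "8 \<le> Q" using pow2_ge_8[OF assms(2)] Q by simp
  then have "x < 2^m" using m assms(4) mult_le_mono1[of 8 Q Q] by linarith
  then have "coset_leader (2^m+1) x \<longleftrightarrow> (\<forall>p\<in>{1..m}. ok p)"
    unfolding ok_def by (rule coset_leader_iff_neg_rot[OF assms(3)])
  also have "\<dots> \<longleftrightarrow> (\<forall>e\<le>3. ok (k+e))"
  proof
    assume "\<forall>p\<in>{1..m}. ok p"
    then show "\<forall>e\<le>3. ok (k+e)" using assms(2) by (auto simp: m_def)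
  next
    assume mid_ok: "\<forall>e\<le>3. ok (k+e)"
    show "\<forall>p\<in>{1..m}. ok p"
    proof
      fix p assume p: "p \<in> {1..m}"
      show "ok p"
      proof (cases "p < k \<or> k+4 \<le> p")
        case True
        then show ?thesis
          using neg_rot_bounds_outside_middle[OF Q assms(2-4)] p by (simp add: ok_def m_def)
      next
        case False
        then have "p - k \<le> 3" "k + (p - k) = p" by auto
        with mid_ok show ?thesis by metis
      qed
    qed
  qed
  also have "\<dots> \<longleftrightarrow> (\<forall>e\<le>3. x \<le> mid_rot Q e (x div Q) (x mod Q) \<and> mid_rot Q e (x div Q) (x mod Q) + x \<le> 16*(Q*Q)+1)"
    using neg_rot_eq_mid_rot[OF Q] m by (simp add: ok_def m_def)
  finally show ?thesis
    by (simp add: m_def)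
qed

text \<open>\<open>(h, lo, u)\<close> stands for the block \<open>h Q + lo \<le> x \<le> (h+1) Q - u\<close>; on each block all four
  middle rotations stay within \<open>[x, n - x]\<close>.\<close>
definition leader_blocks :: "(nat \<times> nat \<times> nat) set" where
  "leader_blocks = {(0,1,1), (1,1,1), (2,1,1), (3,1,1), (4,3,1), (5,1,1), (6,1,1), (7,1,5),
    (8,5,1), (9,1,3), (10,3,1), (11,1,3)}"

definition non_leaders :: "nat \<Rightarrow> nat set" where
  "non_leaders Q = {4*Q+1, 8*Q-3, 8*Q-1, 8*Q+1, 8*Q+3, 10*Q-1, 10*Q+1, 12*Q-1, 12*Q+1, 12*Q+3}"

lemma mid_rot_bounds_on_block:
  fixes Q h lo u w e :: nat
  assumes "8 \<le> Q" "(h, lo, u) \<in> leader_blocks" "lo \<le> w" "w + u \<le> Q" "e \<le> 3"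
  shows "Q*h + w \<le> mid_rot Q e h w \<and> mid_rot Q e h w + (Q*h + w) \<le> 16*(Q*Q)+1"
proof -
  \<comment> \<open>abstracting the products keeps all 48 cases linear\<close>
  obtain Y QQ where Y: "Q * w = Y" and QQ: "Q * Q = QQ" by blast
  have "lo * Q \<le> Y" using mult_le_mono1[OF assms(3), of Q] Y by (simp add: mult.commute)
  moreover have "Y + u * Q \<le> QQ" using mult_le_mono1[OF assms(4), of Q] Y QQ by (simp add: algebra_simps)
  moreover have "8 * Q \<le> QQ" using mult_le_mono1[OF assms(1), of Q] QQ by simp
  moreover have "e = 0 \<or> e = 1 \<or> e = 2 \<or> e = 3" using assms(5) by arith
  ultimately show ?thesis
    using assms(1-4) unfolding leader_blocks_def mid_rot_def Y QQ by auto
qed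

lemma leader_blocks_cover:
  fixes Q x :: nat
  assumes "8 \<le> Q" "x mod Q \<noteq> 0"
    "(1 \<le> x \<and> x \<le> 4*Q - 1) \<or> (4*Q + 3 \<le> x \<and> x \<le> 8*Q - 5)
      \<or> (8*Q + 5 \<le> x \<and> x \<le> 10*Q - 3) \<or> (10*Q + 3 \<le> x \<and> x \<le> 12*Q - 3)"
  shows "\<exists>lo u. (x div Q, lo, u) \<in> leader_blocks \<and> lo \<le> x mod Q \<and> x mod Q + u \<le> Q"
proof -
  define h w where "h = x div Q" and "w = x mod Q"
  have x: "x = Q*h + w" and "0 < w" "w < Q"
    using assms(1,2) by (simp_all add: h_def w_def)
  have "h < 12"
    using assms(1,3) by (auto simp: h_def div_less_iff_less_mult)
  then have "h \<in> {0,1,2,3,4,5,6,7,8,9,10,11}"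
    by (simp add: numeral_eq_Suc less_Suc_eq)
  then show ?thesis
    using assms(1,3) x \<open>0 < w\<close> \<open>w < Q\<close> unfolding leader_blocks_def h_def[symmetric] w_def[symmetric]
    by (elim insertE emptyE; simp; elim disjE conjE; linarith)
qed

lemma non_leaders_violate_mid_rot:
  fixes Q x :: nat
  assumes "8 \<le> Q" "x \<in> non_leaders Q"
  shows "\<exists>e\<le>3. mid_rot Q e (x div Q) (x mod Q) < x \<or> 16*(Q*Q)+1 < mid_rot Q e (x div Q) (x mod Q) + x"
proof -
  have decomp: "x div Q = h \<and> x mod Q = w" if "x = Q*h + w" "w < Q" for h w
    using that by simp
  have low: ?thesis if "x = Q*h + c" "c < Q" "e \<le> 3" "mid_rot Q e h c < x" for h c e
    using that decomp by (intro exI[of _ e]) simp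
  have high: ?thesis if "x = Q*h + (Q - c)" "0 < c" "c \<le> Q" "e \<le> 3"
      "16*(Q*Q) + 1 < mid_rot Q e h (Q - c) + x" for h c e
    using that decomp[of h "Q - c"] by (intro exI[of _ e]) simp
  have QQ: "Q * (Q - c) = Q*Q - c*Q" "c * Q \<le> Q * Q" if "c \<le> 8" for c
    using that assms(1) by (simp_all add: diff_mult_distrib2 mult.commute)
  from assms(2) show ?thesis
    unfolding non_leaders_def
  proof (elim insertE emptyE)
    assume "x = 4*Q+1" then show ?thesis
      by (intro low[of 4 1 2]) (use assms(1) in \<open>simp_all add: mid_rot_def\<close>)
  next
    assume "x = 8*Q-3" then show ?thesis
      by (intro high[of 7 3 3]) (use assms(1) QQ[of 3] in \<open>simp_all add: mid_rot_def\<close>)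
  next
    assume "x = 8*Q-1" then show ?thesis
      by (intro high[of 7 1 2]) (use assms(1) QQ[of 1] in \<open>simp_all add: mid_rot_def\<close>)
  next
    assume "x = 8*Q+1" then show ?thesis
      by (intro low[of 8 1 1]) (use assms(1) in \<open>simp_all add: mid_rot_def\<close>)
  next
    assume "x = 8*Q+3" then show ?thesis
      by (intro low[of 8 3 3]) (use assms(1) in \<open>simp_all add: mid_rot_def\<close>)
  next
    assume "x = 10*Q-1" then show ?thesis
      by (intro high[of 9 1 1]) (use assms(1) QQ[of 1] in \<open>simp_all add: mid_rot_def\<close>)
  next
    assume "x = 10*Q+1" then show ?thesis
      by (intro low[of 10 1 1]) (use assms(1) in \<open>simp_all add: mid_rot_def\<close>)
  next
    assume "x = 12*Q-1" then show ?thesis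
      by (intro high[of 11 1 1]) (use assms(1) QQ[of 1] in \<open>simp_all add: mid_rot_def\<close>)
  next
    assume "x = 12*Q+1" then show ?thesis
      by (intro low[of 12 1 1]) (use assms(1) in \<open>simp_all add: mid_rot_def\<close>)
  next
    assume "x = 12*Q+3" then show ?thesis
      by (intro low[of 12 3 2]) (use assms(1) in \<open>simp_all add: mid_rot_def\<close>)
  qed
qed

lemma odd_near_even:
  fixes c x :: nat
  assumes "even c" "odd x" "c \<le> x + 3" "x \<le> c + 3"
  shows "x \<in> {c - 3, c - 1, c + 1, c + 3}"
proof -
  define d where "d = x + 3 - c"
  have "even d" using assms(1-3) by (simp add: d_def even_diff_nat)
  moreover have "d \<le> 6" using assms(4) by (simp add: d_def)
  ultimately have "d = 0 \<or> d = 2 \<or> d = 4 \<or> d = 6" by presburger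
  then show ?thesis using assms(3) by (auto simp: d_def)
qed

lemma odd_windows_in_non_leaders:
  fixes Q x :: nat
  assumes "even Q" "8 \<le> Q" "odd x"
    "x = 4*Q + 1 \<or> (8*Q - 3 \<le> x \<and> x \<le> 8*Q + 3) \<or> (10*Q - 1 \<le> x \<and> x \<le> 10*Q + 1)
      \<or> (12*Q - 1 \<le> x \<and> x \<le> 12*Q + 3)"
  shows "x \<in> non_leaders Q"
  using assms(4)
proof (elim disjE conjE)
  assume "x = 4*Q + 1" then show ?thesis by (simp add: non_leaders_def)
next
  assume "8*Q - 3 \<le> x" "x \<le> 8*Q + 3"
  with assms have "x \<in> {8*Q - 3, 8*Q - 1, 8*Q + 1, 8*Q + 3}" by (intro odd_near_even) auto
  then show ?thesis by (auto simp: non_leaders_def)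
next
  assume "10*Q - 1 \<le> x" "x \<le> 10*Q + 1"
  with assms have "x \<in> {10*Q - 3, 10*Q - 1, 10*Q + 1, 10*Q + 3}" by (intro odd_near_even) auto
  with \<open>10*Q - 1 \<le> x\<close> \<open>x \<le> 10*Q + 1\<close> assms(2) show ?thesis
    unfolding non_leaders_def by (elim insertE emptyE; simp; linarith)
next
  assume "12*Q - 1 \<le> x" "x \<le> 12*Q + 3"
  with assms have "x \<in> {12*Q - 3, 12*Q - 1, 12*Q + 1, 12*Q + 3}" by (intro odd_near_even) auto
  with \<open>12*Q - 1 \<le> x\<close> assms(2) show ?thesis
    unfolding non_leaders_def by (elim insertE emptyE; simp; linarith)
qed

lemma coset_leader_on_ranges:
  fixes x k Q :: nat
  assumes Q: "Q = 2^k" and "3 \<le> k" "odd x"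
    "(1 \<le> x \<and> x \<le> 4*Q - 1) \<or> (4*Q + 3 \<le> x \<and> x \<le> 8*Q - 5)
      \<or> (8*Q + 5 \<le> x \<and> x \<le> 10*Q - 3) \<or> (10*Q + 3 \<le> x \<and> x \<le> 12*Q - 3)"
  shows "coset_leader (2^(2*k+4)+1) x"
proof -
  have "8 \<le> Q" using pow2_ge_8[OF assms(2)] Q by simp
  have "x mod Q \<noteq> 0"
    using Q assms(2,3) by (auto simp: mod_eq_0_iff_dvd dest: dvd_trans[of 2 Q x])
  then obtain lo u where "(x div Q, lo, u) \<in> leader_blocks" "lo \<le> x mod Q" "x mod Q + u \<le> Q"
    using leader_blocks_cover[OF \<open>8 \<le> Q\<close> _ assms(4)] by blast
  note block = mid_rot_bounds_on_block[OF \<open>8 \<le> Q\<close> this]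
  have "x \<le> 13*Q" using assms(4) by linarith
  then show ?thesis
    unfolding coset_leader_iff_mid_rot[OF Q assms(2,3) \<open>x \<le> 13*Q\<close>] using block by simp
qed

lemma not_coset_leader_on_windows:
  fixes x k Q :: nat
  assumes Q: "Q = 2^k" and "3 \<le> k" "odd x"
    "x = 4*Q + 1 \<or> (8*Q - 3 \<le> x \<and> x \<le> 8*Q + 3) \<or> (10*Q - 1 \<le> x \<and> x \<le> 10*Q + 1)
      \<or> (12*Q - 1 \<le> x \<and> x \<le> 12*Q + 3)"
  shows "\<not> coset_leader (2^(2*k+4)+1) x"
proof -
  have "8 \<le> Q" using pow2_ge_8[OF assms(2)] Q by simp
  have "even Q" using Q assms(2) by simp
  obtain e where "e \<le> 3" "mid_rot Q e (x div Q) (x mod Q) < x \<or>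
      16*(Q*Q) + 1 < mid_rot Q e (x div Q) (x mod Q) + x"
    using non_leaders_violate_mid_rot[OF \<open>8 \<le> Q\<close> odd_windows_in_non_leaders[OF \<open>even Q\<close> \<open>8 \<le> Q\<close> assms(3,4)]]
    by blast
  moreover have "x \<le> 13*Q" using assms(4) \<open>8 \<le> Q\<close> by linarith
  ultimately show ?thesis
    using coset_leader_iff_mid_rot[OF Q assms(2,3)] by force
qed

theorem theorem4p1:
  fixes t m n x :: nat
  assumes "t \<ge> 2" and "m = 4 * t + 2" and "n = 2 ^ m + 1" and "odd x"
  shows "(1 \<le> x \<and> x \<le> 2 ^ (2*t+1) - 1 \<longrightarrow> coset_leader n x)
    \<and> (2 ^ (2*t+1) + 3 \<le> x \<and> x \<le> 2 ^ (2*t+2) - 5 \<longrightarrow> coset_leader n x)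
    \<and> (2 ^ (2*t+2) + 5 \<le> x \<and> x \<le> 2 ^ (2*t+2) + 2 ^ (2*t) - 3 \<longrightarrow> coset_leader n x)
    \<and> (2 ^ (2*t+2) + 2 ^ (2*t) + 3 \<le> x \<and> x \<le> 2 ^ (2*t+2) + 2 ^ (2*t+1) - 3 \<longrightarrow> coset_leader n x)
    \<and> ((x = 2 ^ (2*t+1) + 1
        \<or> (2 ^ (2*t+2) - 3 \<le> x \<and> x \<le> 2 ^ (2*t+2) + 3)
        \<or> (2 ^ (2*t+2) + 2 ^ (2*t) - 1 \<le> x \<and> x \<le> 2 ^ (2*t+2) + 2 ^ (2*t) + 1)
        \<or> (2 ^ (2*t+2) + 2 ^ (2*t+1) - 1 \<le> x \<and> x \<le> 2 ^ (2*t+2) + 2 ^ (2*t+1) + 3))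
       \<longrightarrow> \<not> coset_leader n x)"
proof -
  define k Q where "k = 2*t - 1" and "Q = (2::nat)^k"
  have "3 \<le> k" "2*k+4 = m"
    using assms(1,2) by (simp_all add: k_def)
  then have k: "3 \<le> k" "n = 2^(2*k+4) + 1"
    using assms(3) by simp_all
  have "2*t+1 = k+2" "2*t+2 = k+3" "2*t = k+1"
    using assms(1) by (simp_all add: k_def)
  then have "(2::nat)^(2*t+1) = 4*Q" "(2::nat)^(2*t+2) = 8*Q" "(2::nat)^(2*t) = 2*Q"
    by (simp_all add: Q_def power_add)
  then show ?thesis
    using coset_leader_on_ranges[OF Q_def k(1) assms(4)] not_coset_leader_on_windows[OF Q_def k(1) assms(4)]
    unfolding k(2) by auto
qed

end
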